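(* Let $F\subsetneq K$ be fields of characteristic $0$, with $F$ a proper nonempty subfield of $K$. Let $p(x)=\sum_{k=0}^{n}a_k x^k\in K[x]$ with $a_n\neq 0$, and $q(x)=\sum_{j=0}^{m}b_j x^j\in K[x]$ with $b_m\neq 0$ and $b_0,b_m\in F$. Suppose $p\circ q\in F[x]$. Then $p\in F[x]$ or $q\in F[x]$. Moreover, if $p\circ q$ is not constant, then $p\in F[x]$ and $q\in F[x]$.
   Context: $F[x]$ denotes the set of polynomials with all coefficients in $F$. *)

theory Defs
  imports "HOL-Computational_Algebra.Polynomial"
begin

definition subfield :: "'a::field set \<Rightarrow> bool" where
  "subfield F \<longleftrightarrow> 0 \<in> F \<and> 1 \<in> F \<and>
     (\<forall>x\<in>F. \<forall>y\<in>F. x + y \<in> F \<and> x * y \<in> F) \<and>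
     (\<forall>x\<in>F. - x \<in> F \<and> inverse x \<in> F)"

definition poly_over :: "'a::zero set \<Rightarrow> 'a poly \<Rightarrow> bool" where
  "poly_over F p \<longleftrightarrow> (\<forall>i. coeff p i \<in> F)"

end

theory Submission
  imports Defs
begin

(* Let n = deg p, m = deg q, and let a and b be the leading coefficients of p and q.
  Since the leading coefficient of p(q) is a b^n, we get a \<in> F.  All monomials of p
  except a x^n contribute to p(q) only in degrees \<le> (n-1)m, so the coefficients of
  a q^n in degrees (n-1)m + j, 0 < j < m, lie in F.  That coefficient of q^n is
  n b^(n-1) q_j plus a polynomial in q_(j+1), ..., q_m, so by descending induction on j,
  dividing by n b^(n-1) (characteristic 0), all q_j lie in F.  Once q \<in> F[x], peeling
  off the top monomial of p and inducting on deg p shows p \<in> F[x]. *)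

context
  fixes F :: "'a::field set"
  assumes F: "subfield F"
begin

lemma subfield_0: "0 \<in> F"
  and subfield_1: "1 \<in> F"
  and subfield_add: "x \<in> F \<Longrightarrow> y \<in> F \<Longrightarrow> x + y \<in> F"
  and subfield_mult: "x \<in> F \<Longrightarrow> y \<in> F \<Longrightarrow> x * y \<in> F"
  and subfield_uminus: "x \<in> F \<Longrightarrow> - x \<in> F"
  and subfield_inverse: "x \<in> F \<Longrightarrow> inverse x \<in> F"
  using F unfolding subfield_def by auto

lemma subfield_diff: "x \<in> F \<Longrightarrow> y \<in> F \<Longrightarrow> x - y \<in> F"
  using subfield_add[of x "- y"] subfield_uminus[of y] by simp

lemma subfield_divide: "x \<in> F \<Longrightarrow> y \<in> F \<Longrightarrow> x / y \<in> F"
  using subfield_mult[of x "inverse y"] subfield_inverse[of y] by (simp add: divide_inverse)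

lemma subfield_power: "x \<in> F \<Longrightarrow> x ^ n \<in> F"
  by (induction n) (auto intro: subfield_1 subfield_mult)

lemma subfield_of_nat: "of_nat n \<in> F"
  by (induction n) (auto intro: subfield_0 subfield_1 subfield_add)

lemma subfield_sum: "(\<And>i. i \<in> A \<Longrightarrow> f i \<in> F) \<Longrightarrow> sum f A \<in> F"
  by (induction A rule: infinite_finite_induct) (auto intro: subfield_0 subfield_add)

lemma poly_over_const_iff: "poly_over F [:c:] \<longleftrightarrow> c \<in> F"
  unfolding poly_over_def by (auto simp: coeff_pCons split: nat.splits intro: subfield_0)

lemma poly_over_monom: "c \<in> F \<Longrightarrow> poly_over F (monom c n)"
  unfolding poly_over_def by (auto simp: coeff_monom intro: subfield_0)

lemma poly_over_add: "poly_over F p \<Longrightarrow> poly_over F q \<Longrightarrow> poly_over F (p + q)"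
  unfolding poly_over_def by (auto intro: subfield_add)

lemma poly_over_diff: "poly_over F p \<Longrightarrow> poly_over F q \<Longrightarrow> poly_over F (p - q)"
  unfolding poly_over_def by (auto intro: subfield_diff)

lemma poly_over_smult: "c \<in> F \<Longrightarrow> poly_over F p \<Longrightarrow> poly_over F (smult c p)"
  unfolding poly_over_def by (auto intro: subfield_mult)

lemma poly_over_mult: "poly_over F p \<Longrightarrow> poly_over F q \<Longrightarrow> poly_over F (p * q)"
  unfolding poly_over_def coeff_mult by (auto intro!: subfield_sum subfield_mult)

lemma poly_over_power: "poly_over F p \<Longrightarrow> poly_over F (p ^ n)"
  by (induction n) (auto simp flip: pCons_one simp: poly_over_const_iff subfield_1
      intro: poly_over_mult)

lemma poly_over_const_of_pcompose:
  assumes "degree p = 0" and "poly_over F (pcompose p q)"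
  shows "poly_over F p"
proof -
  obtain c where "p = [:c:]"
    using assms(1) by (rule degree_eq_zeroE)
  with assms(2) show ?thesis
    by (simp add: poly_over_const_iff)
qed

end

lemma coeff_mult_degree_bounds:
  fixes p q :: "'a::comm_semiring_1 poly"
  assumes "degree p \<le> m" and "degree q \<le> n"
  shows "coeff (p * q) (m + n) = coeff p m * coeff q n"
proof (cases "degree p = m \<and> degree q = n")
  case True
  then show ?thesis
    using coeff_mult_degree_sum[of p q] by simp
next
  case False
  then have "degree (p * q) < m + n"
    using degree_mult_le[of p q] assms by linarith
  with False assms show ?thesis
    by (auto simp: coeff_eq_0 le_less)
qed

lemma degree_power_bound:
  fixes p :: "'a::comm_semiring_1 poly"
  assumes "degree p \<le> m"
  shows "degree (p ^ n) \<le> n * m"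
  using degree_power_le[of p n] mult_le_mono1[OF assms, of n] by (metis order.trans mult.commute)

lemma coeff_power_degree_bound:
  fixes p :: "'a::comm_semiring_1 poly"
  assumes "degree p \<le> m"
  shows "coeff (p ^ n) (n * m) = coeff p m ^ n"
proof (induction n)
  case (Suc n)
  then show ?case
    using coeff_mult_degree_bounds[OF assms degree_power_bound[OF assms]] by simp
qed simp

lemma power_add_lower_degree:
  fixes u v :: "'a::comm_ring_1 poly"
  assumes u: "degree u \<le> m" and v: "degree v \<le> j" and "j < m"
  shows "degree ((u + v) ^ Suc n - u ^ Suc n) \<le> n * m + j \<and>
    coeff ((u + v) ^ Suc n - u ^ Suc n) (n * m + j) = of_nat (Suc n) * coeff u m ^ n * coeff v j"
proof (induction n)
  case 0
  then show ?case
    using v by simp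
next
  case (Suc n)
  define D where "D = (u + v) ^ Suc n - u ^ Suc n"
  have D: "degree D \<le> n * m + j" "coeff D (n * m + j) = of_nat (Suc n) * coeff u m ^ n * coeff v j"
    using Suc.IH unfolding D_def by auto
  have un: "degree (u ^ Suc n) \<le> Suc n * m"
    using u by (rule degree_power_bound)
  have expand: "(u + v) ^ Suc (Suc n) - u ^ Suc (Suc n) = u * D + v * D + u ^ Suc n * v"
    unfolding D_def by (simp add: algebra_simps)
  have deg_uD: "degree (u * D) \<le> Suc n * m + j"
    using degree_mult_le[of u D] u D(1) by simp
  have deg_vD: "degree (v * D) < Suc n * m + j"
    using degree_mult_le[of v D] v D(1) \<open>j < m\<close> by simp
  have deg_unv: "degree (u ^ Suc n * v) \<le> Suc n * m + j"
    using degree_mult_le[of "u ^ Suc n" v] un v by simp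
  have "coeff (u * D) (Suc n * m + j) = coeff u m * coeff D (n * m + j)"
    using coeff_mult_degree_bounds[OF u D(1)] by (simp add: add.assoc)
  moreover have "coeff (v * D) (Suc n * m + j) = 0"
    using deg_vD by (simp add: coeff_eq_0)
  moreover have "coeff (u ^ Suc n * v) (Suc n * m + j) = coeff u m ^ Suc n * coeff v j"
    using coeff_mult_degree_bounds[OF un v] coeff_power_degree_bound[OF u, of "Suc n"] by (simp only:)
  ultimately have "coeff ((u + v) ^ Suc (Suc n) - u ^ Suc (Suc n)) (Suc n * m + j) =
      of_nat (Suc (Suc n)) * coeff u m ^ Suc n * coeff v j"
    unfolding expand D(2) by (simp add: algebra_simps)
  moreover have "degree ((u + v) ^ Suc (Suc n) - u ^ Suc (Suc n)) \<le> Suc n * m + j"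
    unfolding expand using deg_uD deg_vD deg_unv
    by (meson degree_add_le less_imp_le)
  ultimately show ?case
    by simp
qed

lemma poly_over_of_top_coeffs_of_power:
  fixes q :: "'a::field_char_0 poly"
  assumes F: "subfield F" and m: "degree q = m"
    and "lead_coeff q \<in> F" and "coeff q 0 \<in> F"
    and top: "\<And>j. 0 < j \<Longrightarrow> j < m \<Longrightarrow> coeff (q ^ Suc n) (n * m + j) \<in> F"
  shows "poly_over F q"
  unfolding poly_over_def
proof
  fix j
  show "coeff q j \<in> F"
  proof (induction "m - j" arbitrary: j rule: less_induct)
    case less
    consider "j = 0" | "m \<le> j" | "0 < j" "j < m"
      by linarith
    then show ?case
    proof cases
      case 1
      then show ?thesis
        using \<open>coeff q 0 \<in> F\<close> by simp
    next
      case 2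
      then show ?thesis
        using \<open>lead_coeff q \<in> F\<close> subfield_0[OF F] m by (cases "j = m") (auto simp: coeff_eq_0)
    next
      case 3
      define v where "v = poly_cutoff (Suc j) q"
      define u where "u = q - v"
      have coeff_u: "coeff u i = (if i \<le> j then 0 else coeff q i)" for i
        unfolding u_def v_def by (simp add: coeff_poly_cutoff)
      have "degree u \<le> m"
        using m by (intro degree_le) (auto simp: coeff_u coeff_eq_0)
      moreover have "degree v \<le> j"
        unfolding v_def by (intro degree_le) (simp add: coeff_poly_cutoff)
      ultimately have "coeff (q ^ Suc n) (n * m + j) - coeff (u ^ Suc n) (n * m + j) =
          of_nat (Suc n) * lead_coeff q ^ n * coeff q j"
        using power_add_lower_degree[of u m v j n] \<open>j < m\<close> m
        by (simp only: u_def coeff_u v_def coeff_poly_cutoff coeff_diff) simp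
      moreover have "of_nat (Suc n) * lead_coeff q ^ n \<noteq> 0"
        using \<open>j < m\<close> m by (auto simp del: of_nat_Suc)
      ultimately have coeff_q: "coeff q j = (coeff (q ^ Suc n) (n * m + j) - coeff (u ^ Suc n) (n * m + j))
          / (of_nat (Suc n) * lead_coeff q ^ n)"
        by (simp add: eq_divide_eq mult.commute)
      have "poly_over F u"
        unfolding poly_over_def coeff_u using less 3 subfield_0[OF F] by auto
      then have "coeff (u ^ Suc n) (n * m + j) \<in> F"
        using poly_over_power[OF F] unfolding poly_over_def by blast
      then show ?thesis
        unfolding coeff_q using 3 top \<open>lead_coeff q \<in> F\<close>
        by (intro subfield_divide[OF F] subfield_diff[OF F] subfield_mult[OF F]
            subfield_of_nat[OF F] subfield_power[OF F]) auto
    qed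
  qed
qed

lemma degree_diff_lead_monom_le: "degree (p - monom (lead_coeff p) (degree p)) \<le> degree p - 1"
  by (intro degree_le) (auto simp: coeff_monom coeff_eq_0)

lemma pcompose_eq_lead_plus_lower:
  fixes p q :: "'a::comm_ring_1 poly"
  shows "pcompose p q =
    smult (lead_coeff p) (q ^ degree p) + pcompose (p - monom (lead_coeff p) (degree p)) q"
proof -
  have "pcompose (monom c k) q = smult c (q ^ k)" for c k
    by (induction k) (simp_all add: monom_0 monom_Suc pcompose_pCons)
  then show ?thesis
    by (simp add: pcompose_diff)
qed

lemma coeff_pcompose_high:
  fixes p q :: "'a::comm_ring_1 poly"
  assumes "degree p = Suc n" and "n * degree q < k"
  shows "coeff (pcompose p q) k = lead_coeff p * coeff (q ^ Suc n) k"
proof -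
  have "degree (pcompose (p - monom (lead_coeff p) (degree p)) q) \<le> n * degree q"
    using degree_pcompose_le[of "p - monom (lead_coeff p) (degree p)" q]
      degree_diff_lead_monom_le[of p] assms(1)
    by (metis diff_Suc_1 le_trans mult_le_mono1)
  then show ?thesis
    using assms by (subst pcompose_eq_lead_plus_lower) (simp add: coeff_eq_0)
qed

lemma lead_coeff_in_subfield_of_pcompose:
  fixes p q :: "'a::field poly"
  assumes F: "subfield F" and "poly_over F (pcompose p q)"
    and "0 < degree q" and "lead_coeff q \<in> F"
  shows "lead_coeff p \<in> F"
proof -
  have "lead_coeff (pcompose p q) = lead_coeff p * lead_coeff q ^ degree p"
    using \<open>0 < degree q\<close> by (rule lead_coeff_comp)
  moreover have "lead_coeff q \<noteq> 0"
    using \<open>0 < degree q\<close> by auto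
  ultimately have "lead_coeff p = lead_coeff (pcompose p q) / lead_coeff q ^ degree p"
    by simp
  then show ?thesis
    using assms unfolding poly_over_def by (metis subfield_divide subfield_power)
qed

lemma poly_over_right_of_pcompose:
  fixes p q :: "'a::field_char_0 poly"
  assumes F: "subfield F" and pq: "poly_over F (pcompose p q)"
    and "0 < degree p" and "0 < degree q"
    and "lead_coeff q \<in> F" and "coeff q 0 \<in> F"
  shows "poly_over F q"
proof -
  obtain n where n: "degree p = Suc n"
    using \<open>0 < degree p\<close> gr0_implies_Suc by blast
  have lead_p: "lead_coeff p \<in> F" "lead_coeff p \<noteq> 0"
    using lead_coeff_in_subfield_of_pcompose[OF F pq] assms by auto
  have "coeff (q ^ Suc n) (n * degree q + j) \<in> F" if "0 < j" for j
  proof -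
    have "coeff (q ^ Suc n) (n * degree q + j) = coeff (pcompose p q) (n * degree q + j) / lead_coeff p"
      using coeff_pcompose_high[OF n, where k = "n * degree q + j"] that lead_p(2) by simp
    then show ?thesis
      using pq lead_p(1) subfield_divide[OF F] unfolding poly_over_def by simp
  qed
  then show ?thesis
    using poly_over_of_top_coeffs_of_power[OF F refl] assms by blast
qed

lemma poly_over_left_of_pcompose:
  fixes p q :: "'a::field poly"
  assumes F: "subfield F" and q: "poly_over F q" and "0 < degree q"
  shows "poly_over F (pcompose p q) \<Longrightarrow> poly_over F p"
proof (induction "degree p" arbitrary: p rule: less_induct)
  case less
  show ?case
  proof (cases "degree p = 0")
    case True
    then show ?thesis
      using poly_over_const_of_pcompose[OF F] less.prems by blast
  next
    case False
    define a where "a = lead_coeff p"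
    define r where "r = p - monom a (degree p)"
    have a: "a \<in> F"
      unfolding a_def using lead_coeff_in_subfield_of_pcompose[OF F less.prems \<open>0 < degree q\<close>] q
      unfolding poly_over_def by blast
    have "pcompose r q = pcompose p q - smult a (q ^ degree p)"
      using pcompose_eq_lead_plus_lower[of p q] unfolding r_def a_def by simp
    then have "poly_over F (pcompose r q)"
      using less.prems poly_over_diff[OF F] poly_over_smult[OF F a] poly_over_power[OF F q] by simp
    moreover have "degree r < degree p"
      using degree_diff_lead_monom_le[of p] False unfolding r_def a_def by simp
    ultimately have "poly_over F r"
      using less.hyps by blast
    moreover have "p = r + monom a (degree p)"
      unfolding r_def by simp
    ultimately show ?thesis
      using poly_over_add[OF F _ poly_over_monom[OF F a]] by metis
  qed
qed

theorem theorem13: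
  fixes F :: "'a::field_char_0 set" and p q :: "'a poly"
  assumes "subfield F" and "F \<noteq> UNIV"
    and "p \<noteq> 0" and "q \<noteq> 0"
    and "coeff q 0 \<in> F" and "lead_coeff q \<in> F"
    and "poly_over F (pcompose p q)"
  shows "(poly_over F p \<or> poly_over F q) \<and>
         (degree (pcompose p q) > 0 \<longrightarrow> poly_over F p \<and> poly_over F q)"
proof (cases "degree p = 0 \<or> degree q = 0")
  case True
  then have "degree (pcompose p q) = 0"
    by (auto simp: degree_pcompose)
  moreover have "poly_over F p \<or> poly_over F q"
  proof (cases "degree p = 0")
    case False
    then have "q = [:coeff q 0:]"
      using True by (auto elim: degree_eq_zeroE)
    then show ?thesis
      using poly_over_const_iff[OF assms(1)] assms(5) by metis
  qed (use poly_over_const_of_pcompose[OF assms(1) _ assms(7)] in blast)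
  ultimately show ?thesis
    by simp
next
  case False
  then have "poly_over F q"
    using poly_over_right_of_pcompose assms by blast
  moreover from this have "poly_over F p"
    using poly_over_left_of_pcompose assms False by blast
  ultimately show ?thesis
    by simp
qed

end
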